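(* Let $L=dN$ with integers $d\ge2$, $N\ge1$, and let $0<|z|<r_0$. Then the set $\mathcal L_z$ can be partitioned into $N$ subsets $\mathcal L_z^{(i)}$, $1\le i\le N$, each of $d-1$ elements, such that there is a map $M:\mathcal L_z\to\mathcal R_z$ with $M(u)=M(u')$ whenever $u,u'$ lie in the same subset $\mathcal L_z^{(i)}$, and $v=M(u)$ satisfies $v(v+1)^{d-1}=u(u+1)^{d-1}$.
   Context: $\rho=N/L=1/d$, $r_0=\rho^\rho(1-\rho)^{1-\rho}$. For $0<|z|<r_0$, the roots of $w^N(w+1)^{L-N}=z^L$ are simple and none has real part $-\rho$; $\mathcal L_z$ is the set of roots with real part $<-\rho$ and $\mathcal R_z$ the set with real part $>-\rho$. *)

theory Defs
  imports "HOL-Analysis.Analysis"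
begin

text \<open>rho = N/L = 1/d and r0 = rho^rho (1-rho)^(1-rho).\<close>
definition rho :: "nat \<Rightarrow> real" where
  "rho d = 1 / real d"

definition r0 :: "nat \<Rightarrow> real" where
  "r0 d = rho d powr rho d * (1 - rho d) powr (1 - rho d)"

definition bethe_roots :: "nat \<Rightarrow> nat \<Rightarrow> complex \<Rightarrow> complex set" where
  "bethe_roots d N z = {w. w ^ N * (w + 1) ^ (d * N - N) = z ^ (d * N)}"

definition Lset :: "nat \<Rightarrow> nat \<Rightarrow> complex \<Rightarrow> complex set" where
  "Lset d N z = {w \<in> bethe_roots d N z. Re w < - rho d}"

definition Rset :: "nat \<Rightarrow> nat \<Rightarrow> complex \<Rightarrow> complex set" where
  "Rset d N z = {w \<in> bethe_roots d N z. Re w > - rho d}"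

end

theory Submission
  imports Defs "HOL-Computational_Algebra.Fundamental_Theorem_Algebra"
begin

text \<open>
With f(w) = w (w + 1)^(d-1) the Bethe equation reads f(w)^N = (z^d)^N, so its roots are the
preimages under f of the N points c = \<omega> z^d with \<omega>^N = 1, all of modulus
|z|^d < r0^d = \<rho> (1 - \<rho>)^(d-1). This bound is |f| at the critical point -\<rho> and a lower
bound for |f| on the whole line Re w = -\<rho>, so no root lies on that line. Every preimage of c
right of the line lies in the closed disc of radius \<rho>, on which w \<mapsto> c / (w + 1)^(d-1) is a
contraction; hence exactly one does. Since c avoids the critical values 0 and f(-\<rho>), f(w) = c
has d simple roots, so d - 1 of them lie left of the line. The classes are the left parts of the
fibres over the points \<omega> z^d, and M sends u to the right preimage of f(u).
\<close>

definition bethe_map :: "nat \<Rightarrow> complex \<Rightarrow> complex" where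
  "bethe_map d w = w * (w + 1) ^ (d - 1)"

definition critical_value :: "nat \<Rightarrow> real" where
  "critical_value d = rho d * (1 - rho d) ^ (d - 1)"

lemma rho_bounds: "d \<ge> 2 \<Longrightarrow> 0 < rho d \<and> rho d < 1"
  by (simp add: rho_def)

lemma r0_power_eq_critical_value:
  assumes "d \<ge> 2"
  shows "r0 d ^ d = critical_value d"
proof -
  have a: "0 < rho d" "0 < 1 - rho d" using rho_bounds[OF assms] by auto
  have "real d * rho d = 1" and "real d * (1 - rho d) = real (d - 1)"
    using assms by (simp_all add: rho_def field_simps)
  then have "r0 d ^ d = rho d powr 1 * (1 - rho d) powr real (d - 1)"
    using a by (simp add: r0_def power_mult_distrib powr_power)
  also have "\<dots> = critical_value d"
    using a by (simp add: critical_value_def powr_realpow)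
  finally show ?thesis .
qed

lemma critical_value_le_norm_bethe_map:
  assumes "d \<ge> 1" and "Re w = - rho d"
  shows "critical_value d \<le> cmod (bethe_map d w)"
proof -
  have "rho d \<le> cmod w" using abs_Re_le_cmod[of w] assms by simp
  moreover have "1 - rho d \<le> cmod (w + 1)" using abs_Re_le_cmod[of "w + 1"] assms by simp
  moreover have "0 \<le> 1 - rho d" using assms by (simp add: rho_def)
  ultimately have "rho d * (1 - rho d) ^ (d - 1) \<le> cmod w * cmod (w + 1) ^ (d - 1)"
    by (intro mult_mono power_mono) (auto simp: rho_def)
  then show ?thesis by (simp add: critical_value_def bethe_map_def norm_mult norm_power)
qed

lemma norm_lt_rho_if_right_of_line:
  assumes "d \<ge> 2" and "Re v > - rho d" and "cmod (bethe_map d v) < critical_value d"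
  shows "cmod v < rho d"
proof -
  have b: "0 < 1 - rho d" using rho_bounds[OF assms(1)] by simp
  have "1 - rho d \<le> cmod (v + 1)" using abs_Re_le_cmod[of "v + 1"] assms(2) by simp
  then have "cmod v * (1 - rho d) ^ (d - 1) \<le> cmod v * cmod (v + 1) ^ (d - 1)"
    using b by (intro mult_left_mono power_mono) auto
  also have "\<dots> < rho d * (1 - rho d) ^ (d - 1)"
    using assms(3) by (simp add: bethe_map_def critical_value_def norm_mult norm_power)
  finally show ?thesis using b by simp
qed

lemma norm_add_one_ge_in_cball:
  assumes "w \<in> cball 0 (rho d)"
  shows "1 - rho d \<le> cmod (w + 1)"
  using norm_triangle_ineq4[of "w + 1" w] assms by simp

lemma norm_diff_div_power_le:
  assumes "d \<ge> 2" and "x \<in> cball 0 (rho d)" and "y \<in> cball 0 (rho d)"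
  shows "cmod (c / (x + 1) ^ (d - 1) - c / (y + 1) ^ (d - 1))
           \<le> cmod c / critical_value d * cmod (x - y)"
proof -
  define m where "m = d - 1"
  define b where "b = 1 - rho d"
  have b: "0 < b" and m: "real m * rho d = b" "m \<ge> 1"
    using rho_bounds[OF assms(1)] assms(1) by (auto simp: b_def m_def rho_def field_simps)
  have crit: "critical_value d = rho d * b ^ m" by (simp add: critical_value_def b_def m_def)
  note near = norm_add_one_ge_in_cball[of _ d, folded b_def]
  have deriv: "((\<lambda>w. c * inverse (w + 1) ^ m) has_field_derivative
                 - (c * m * inverse (w + 1) ^ (m + 1))) (at w within cball 0 (rho d))"
    if "w \<in> cball 0 (rho d)" for w
  proof -
    have "w + 1 \<noteq> 0" using near[OF that] b by auto
    moreover obtain k where "m = Suc k" using m(2) by (cases m) auto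
    ultimately show ?thesis
      by (auto intro!: derivative_eq_intros simp del: power_Suc) (simp add: algebra_simps)
  qed
  have bound: "cmod (- (c * m * inverse (w + 1) ^ (m + 1))) \<le> cmod c / critical_value d"
    if "w \<in> cball 0 (rho d)" for w
  proof -
    have "b ^ (m + 1) \<le> cmod (w + 1) ^ (m + 1)" using near[OF that] b by (intro power_mono) auto
    moreover have "cmod (c * m * inverse (w + 1) ^ (m + 1)) = cmod c * m / cmod (w + 1) ^ (m + 1)"
      by (simp add: norm_mult norm_power norm_inverse divide_inverse power_inverse)
    ultimately have "cmod (c * m * inverse (w + 1) ^ (m + 1)) \<le> cmod c * m / b ^ (m + 1)"
      using b by (simp add: frac_le)
    \<comment> \<open>the Lipschitz constant is exactly |c| / critical_value d because (d - 1) \<rho> = 1 - \<rho>\<close>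
    also have "\<dots> = cmod c / critical_value d"
      using b m rho_bounds[OF assms(1)] by (simp add: crit field_simps)
    finally show ?thesis by simp
  qed
  show ?thesis
    using field_differentiable_bound[OF convex_cball deriv bound assms(2,3)]
    by (simp add: m_def divide_inverse power_inverse)
qed

lemma critical_value_pos: "d \<ge> 2 \<Longrightarrow> 0 < critical_value d"
  using rho_bounds[of d] by (simp add: critical_value_def)

lemma ex1_bethe_preimage_in_cball:
  assumes d: "d \<ge> 2" and c: "cmod c < critical_value d"
  shows "\<exists>!w \<in> cball 0 (rho d). bethe_map d w = c"
proof -
  define g where "g w = c / (w + 1) ^ (d - 1)" for w
  have b: "0 < 1 - rho d" using rho_bounds[OF d] by simp
  have nonzero: "(w + 1) ^ (d - 1) \<noteq> 0" if "w \<in> cball 0 (rho d)" for w :: complex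
    using norm_add_one_ge_in_cball[OF that] b by auto
  have fixpoint_iff: "g w = w \<longleftrightarrow> bethe_map d w = c" if "w \<in> cball 0 (rho d)" for w
    using nonzero[OF that] by (auto simp: g_def bethe_map_def field_simps)
  have "g ` cball 0 (rho d) \<subseteq> cball 0 (rho d)"
  proof clarify
    fix w :: complex assume w: "w \<in> cball 0 (rho d)"
    have "(1 - rho d) ^ (d - 1) \<le> cmod (w + 1) ^ (d - 1)"
      using norm_add_one_ge_in_cball[OF w] b by (intro power_mono) auto
    then have "cmod (g w) \<le> cmod c / (1 - rho d) ^ (d - 1)"
      using b by (simp add: g_def norm_divide norm_power frac_le)
    also have "\<dots> < rho d" using c b by (simp add: critical_value_def divide_less_eq)
    finally show "g w \<in> cball 0 (rho d)" by simp
  qed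
  moreover have "dist (g x) (g y) \<le> cmod c / critical_value d * dist x y"
    if "x \<in> cball 0 (rho d)" "y \<in> cball 0 (rho d)" for x y
    using norm_diff_div_power_le[OF d that] by (simp add: g_def dist_norm)
  moreover have "0 \<le> cmod c / critical_value d" "cmod c / critical_value d < 1"
    using c critical_value_pos[OF d] by auto
  ultimately have "\<exists>!w \<in> cball 0 (rho d). g w = w"
    using rho_bounds[OF d] by (intro Banach_fix) (auto simp: compact_imp_complete)
  then show ?thesis using fixpoint_iff by blast
qed

lemma ex1_right_preimage:
  assumes d: "d \<ge> 2" and c: "cmod c < critical_value d"
  shows "\<exists>!v. Re v > - rho d \<and> bethe_map d v = c"
proof -
  obtain x where x: "x \<in> cball 0 (rho d)" "bethe_map d x = c"
    and unique: "\<And>y. y \<in> cball 0 (rho d) \<Longrightarrow> bethe_map d y = c \<Longrightarrow> y = x"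
    using ex1_bethe_preimage_in_cball[OF d c] by blast
  have "Re x \<ge> - rho d" using x(1) abs_Re_le_cmod[of x] by simp
  moreover have "Re x \<noteq> - rho d"
    using critical_value_le_norm_bethe_map[of d x] d c x(2) by auto
  ultimately have "Re x > - rho d" by simp
  moreover have "v = x" if "Re v > - rho d" "bethe_map d v = c" for v
    using norm_lt_rho_if_right_of_line[OF d that(1)] that(2) c unique by simp
  ultimately show ?thesis using x(2) by blast
qed

definition right_partner :: "nat \<Rightarrow> complex \<Rightarrow> complex" where
  "right_partner d u = (THE v. Re v > - rho d \<and> bethe_map d v = bethe_map d u)"

lemma right_partner:
  assumes "d \<ge> 2" and "cmod (bethe_map d u) < critical_value d"
  shows "Re (right_partner d u) > - rho d \<and> bethe_map d (right_partner d u) = bethe_map d u"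
  unfolding right_partner_def by (rule theI'[OF ex1_right_preimage[OF assms]])

lemma card_roots_rsquarefree:
  fixes p :: "complex poly"
  assumes "rsquarefree p"
  shows "card {z. poly p z = 0} = degree p"
proof -
  have "p \<noteq> 0" using assms by (simp add: rsquarefree_def)
  have "degree p = degree (smult (lead_coeff p) (\<Prod>z | poly p z = 0. [:-z, 1:]))"
    using complex_poly_decompose_rsquarefree[OF assms] by simp
  also have "\<dots> = (\<Sum>z | poly p z = 0. degree [:-z, 1:])"
    using \<open>p \<noteq> 0\<close> by (simp add: degree_prod_sum_eq)
  also have "\<dots> = card {z. poly p z = 0}" by simp
  finally show ?thesis by simp
qed

definition bethe_poly :: "nat \<Rightarrow> complex \<Rightarrow> complex poly" where
  "bethe_poly d c = [:0, 1:] * [:1, 1:] ^ (d - 1) - [:c:]"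

lemma poly_bethe_poly [simp]: "poly (bethe_poly d c) w = bethe_map d w - c"
  by (simp add: bethe_poly_def bethe_map_def add.commute)

lemma degree_bethe_poly:
  assumes "d \<ge> 1"
  shows "degree (bethe_poly d c) = d"
proof -
  have "degree ([:0, 1:] * [:1, 1:] ^ (d - 1) :: complex poly) = d"
    using assms by (subst degree_mult_eq) (auto simp: degree_power_eq)
  then show ?thesis
    using assms unfolding bethe_poly_def diff_conv_add_uminus by (subst degree_add_eq_left) auto
qed

lemma poly_pderiv_bethe_poly:
  assumes "d \<ge> 2"
  shows "poly (pderiv (bethe_poly d c)) w = (w + 1) ^ (d - 2) * (of_nat d * w + 1)"
proof -
  obtain k where k: "d = Suc (Suc k)" using assms by (metis add_2_eq_Suc le_iff_add)
  have "((\<lambda>w. poly (bethe_poly d c) w) has_field_derivative poly (pderiv (bethe_poly d c)) w) (at w)"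
    by (rule poly_DERIV)
  moreover have "((\<lambda>w. poly (bethe_poly d c) w) has_field_derivative
                   (w + 1) ^ (d - 2) * (of_nat d * w + 1)) (at w)"
    unfolding poly_bethe_poly bethe_map_def k
    by (auto intro!: derivative_eq_intros simp del: power_Suc) (simp add: algebra_simps)
  ultimately show ?thesis by (rule DERIV_unique)
qed

lemma rsquarefree_bethe_poly:
  assumes d: "d \<ge> 2" and "c \<noteq> 0" and "c \<noteq> bethe_map d (- rho d)"
  shows "rsquarefree (bethe_poly d c)"
  unfolding rsquarefree_roots
proof (intro allI notI)
  fix a assume a: "poly (bethe_poly d c) a = 0 \<and> poly (pderiv (bethe_poly d c)) a = 0"
  then have "(a + 1) ^ (d - 2) = 0 \<or> of_nat d * a + 1 = 0"
    using d by (simp add: poly_pderiv_bethe_poly)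
  moreover have "a = - rho d" if "of_nat d * a + 1 = 0"
    using that d unfolding rho_def by (simp add: eq_minus_divide_eq) (metis add_eq_0_iff2 mult.commute)
  moreover have "a = - 1" if "(a + 1) ^ (d - 2) = 0"
    using that by (simp add: add_eq_0_iff2)
  ultimately have "a = - 1 \<or> a = - rho d" by blast
  moreover have "bethe_map d (- 1) = 0" using d by (simp add: bethe_map_def)
  moreover have "bethe_map d a = c" using a by simp
  ultimately show False using assms(2,3) by auto
qed

lemma card_bethe_preimage:
  assumes "d \<ge> 2" and "c \<noteq> 0" and "c \<noteq> bethe_map d (- rho d)"
  shows "finite {w. bethe_map d w = c} \<and> card {w. bethe_map d w = c} = d"
proof -
  have roots: "{w. bethe_map d w = c} = {w. poly (bethe_poly d c) w = 0}" by simp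
  have squarefree: "rsquarefree (bethe_poly d c)" using rsquarefree_bethe_poly[OF assms] .
  then have "finite {w. poly (bethe_poly d c) w = 0}"
    by (intro poly_roots_finite) (simp add: rsquarefree_def)
  moreover have "card {w. poly (bethe_poly d c) w = 0} = d"
    using card_roots_rsquarefree[OF squarefree] degree_bethe_poly[of d c] assms(1) by simp
  ultimately show ?thesis unfolding roots by blast
qed

definition left_preimage :: "nat \<Rightarrow> complex \<Rightarrow> complex set" where
  "left_preimage d c = {w. bethe_map d w = c \<and> Re w < - rho d}"

lemma card_left_preimage:
  assumes d: "d \<ge> 2" and "c \<noteq> 0" and c: "cmod c < critical_value d"
  shows "finite (left_preimage d c) \<and> card (left_preimage d c) = d - 1"
proof -
  obtain v where v: "Re v > - rho d" "bethe_map d v = c"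
    and unique: "\<And>u. Re u > - rho d \<Longrightarrow> bethe_map d u = c \<Longrightarrow> u = v"
    using ex1_right_preimage[OF d c] by metis
  have off_line: "Re w \<noteq> - rho d" if "bethe_map d w = c" for w
    using critical_value_le_norm_bethe_map[of d w] d c that by auto
  have split: "{w. bethe_map d w = c} = insert v (left_preimage d c)"
    using v unique off_line by (force simp: left_preimage_def neq_iff)
  have "v \<notin> left_preimage d c" using v by (simp add: left_preimage_def)
  moreover have "c \<noteq> bethe_map d (- rho d)"
    using off_line[of "- rho d"] by auto
  ultimately show ?thesis
    using card_bethe_preimage[OF d \<open>c \<noteq> 0\<close>] unfolding split by auto
qed

definition unit_root :: "nat \<Rightarrow> nat \<Rightarrow> complex" where
  "unit_root N k = cis (2 * pi * real k / real N)"

lemma power_eq_power_iff_unit_root: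
  fixes x c :: complex
  assumes "N > 0" and "c \<noteq> 0"
  shows "x ^ N = c ^ N \<longleftrightarrow> (\<exists>k<N. x = unit_root N k * c)"
proof -
  have "x ^ N = c ^ N \<longleftrightarrow> (x / c) ^ N = 1" using assms(2) by (simp add: power_divide)
  also have "\<dots> \<longleftrightarrow> (\<exists>k<N. x / c = unit_root N k)"
    using Complex.bij_betw_roots_unity[OF assms(1)] unfolding bij_betw_def unit_root_def by auto
  also have "\<dots> \<longleftrightarrow> (\<exists>k<N. x = unit_root N k * c)" using assms(2) by (simp add: field_simps)
  finally show ?thesis .
qed

lemma norm_unit_root [simp]: "cmod (unit_root N k) = 1"
  by (simp add: unit_root_def)

lemma unit_root_nonzero [simp]: "unit_root N k \<noteq> 0"
  by (simp add: unit_root_def)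

lemma inj_on_unit_root: "inj_on (unit_root N) {..<N}"
  using Complex.bij_betw_roots_unity[of N]
  by (cases "N = 0") (auto simp: bij_betw_def unit_root_def [abs_def])

lemma bethe_roots_eq: "bethe_roots d N z = {w. bethe_map d w ^ N = (z ^ d) ^ N}"
proof -
  have "(d - 1) * N = d * N - N" by (simp add: diff_mult_distrib)
  then show ?thesis
    by (simp add: bethe_roots_def bethe_map_def power_mult_distrib flip: power_mult)
qed

lemma norm_bethe_map_bethe_root:
  assumes "N > 0" and "w \<in> bethe_roots d N z"
  shows "cmod (bethe_map d w) = cmod z ^ d"
proof -
  have "bethe_map d w ^ N = (z ^ d) ^ N" using assms(2) by (simp add: bethe_roots_eq)
  then have "cmod (bethe_map d w) ^ N = (cmod z ^ d) ^ N" by (simp flip: norm_power)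
  then show ?thesis using assms(1) by (auto intro: power_eq_imp_eq_base)
qed

lemma Lset_eq_UN_left_preimage:
  assumes "N > 0" and "z \<noteq> 0"
  shows "Lset d N z = (\<Union>k<N. left_preimage d (unit_root N k * z ^ d))"
proof (rule set_eqI)
  fix w
  have "w \<in> bethe_roots d N z \<longleftrightarrow> (\<exists>k<N. bethe_map d w = unit_root N k * z ^ d)"
    using power_eq_power_iff_unit_root[OF assms(1)] assms(2) by (simp add: bethe_roots_eq)
  then show "w \<in> Lset d N z \<longleftrightarrow> w \<in> (\<Union>k<N. left_preimage d (unit_root N k * z ^ d))"
    by (auto simp: Lset_def left_preimage_def)
qed

theorem lemma10p1:
  fixes d N :: nat and z :: complex
  assumes "d \<ge> 2" and "N \<ge> 1"
    and "0 < cmod z" and "cmod z < r0 d"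
  shows "\<exists>(P :: nat \<Rightarrow> complex set) (M :: complex \<Rightarrow> complex).
           (\<Union>i\<in>{1..N}. P i) = Lset d N z
         \<and> (\<forall>i\<in>{1..N}. \<forall>j\<in>{1..N}. i \<noteq> j \<longrightarrow> P i \<inter> P j = {})
         \<and> (\<forall>i\<in>{1..N}. finite (P i) \<and> card (P i) = d - 1)
         \<and> (\<forall>u\<in>Lset d N z. M u \<in> Rset d N z)
         \<and> (\<forall>i\<in>{1..N}. \<forall>u\<in>P i. \<forall>u'\<in>P i. M u = M u')
         \<and> (\<forall>u\<in>Lset d N z. M u * (M u + 1) ^ (d - 1) = u * (u + 1) ^ (d - 1))"
proof -
  have N: "N > 0" and z: "z \<noteq> 0" using assms(2,3) by auto
  have small: "cmod z ^ d < critical_value d"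
    using power_strict_mono[OF assms(4), of d] assms(1,3) r0_power_eq_critical_value[OF assms(1)]
    by simp
  have partner: "Re (right_partner d u) > - rho d \<and> bethe_map d (right_partner d u) = bethe_map d u"
    if "u \<in> Lset d N z" for u
  proof -
    have "u \<in> bethe_roots d N z" using that by (simp add: Lset_def)
    then show ?thesis using small norm_bethe_map_bethe_root[OF N] right_partner[OF assms(1)] by simp
  qed
  define P where "P i = left_preimage d (unit_root N (i - 1) * z ^ d)" for i
  have "(\<Union>i\<in>{1..N}. P i) = Lset d N z"
  proof -
    have "{..<N} = (\<lambda>i. i - 1) ` {1..N}"
      by (auto simp: image_iff intro!: bexI[where x = "Suc _"])
    then show ?thesis unfolding Lset_eq_UN_left_preimage[OF N z] P_def by simp
  qed
  moreover have "P i \<inter> P j = {}" if "i \<in> {1..N}" "j \<in> {1..N}" "i \<noteq> j" for i j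
    using that z by (auto simp: P_def left_preimage_def inj_on_eq_iff[OF inj_on_unit_root])
  moreover have "finite (P i) \<and> card (P i) = d - 1" for i
    unfolding P_def using small z
    by (intro card_left_preimage[OF assms(1)]) (auto simp: norm_mult norm_power)
  moreover have "right_partner d u \<in> Rset d N z" if "u \<in> Lset d N z" for u
    using partner[OF that] that by (simp add: Rset_def Lset_def bethe_roots_eq)
  moreover have "right_partner d u = right_partner d u'" if "u \<in> P i" "u' \<in> P i" for i u u'
    using that by (simp add: right_partner_def P_def left_preimage_def)
  moreover have "right_partner d u * (right_partner d u + 1) ^ (d - 1) = u * (u + 1) ^ (d - 1)"
    if "u \<in> Lset d N z" for u
    using partner[OF that] by (simp add: bethe_map_def)
  ultimately show ?thesis by (intro exI[of _ P] exI[of _ "right_partner d"]) blast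
qed

end
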